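(* Let $n,r\ge1$ and $\mathbf U^0=\mathbb Q(v)[K_1^{\pm1},\dots,K_n^{\pm1}]$. The ideal of $\mathbf U^0$ generated by $$I_r=\{1-\textstyle\sum_{\lambda\in\Lambda(n,r)}\mathfrak L_\lambda\}\cup\{\mathfrak L_\lambda\mathfrak L_\mu-\delta_{\lambda,\mu}\mathfrak L_\lambda\mid\lambda,\mu\in\Lambda(n,r)\}\cup\{K_i\mathfrak L_\lambda-v^{\lambda_i}\mathfrak L_\lambda\mid 1\le i\le n,\ \lambda\in\Lambda(n,r)\}$$ coincides with the ideal generated by $$J_r=\{K_1K_2\cdots K_n-v^r\}\cup\{[K_i;r+1]^!\mid 1\le i\le n\}.$$
   Context: $\Lambda(n,r)$ is the set of compositions $\lambda=(\lambda_1,\dots,\lambda_n)\in\mathbb N^n$ with $\sum\lambda_i=r$. For an invertible element $X$ and integers $a$, $t\ge1$: $\left[{X;a\atop t}\right]=\prod_{s=1}^t\frac{Xv^{a-s+1}-X^{-1}v^{-a+s-1}}{v^s-v^{-s}}$ and $\left[{X;a\atop 0}\right]=1$. For $\mu\in\mathbb N^n$, $\mathfrak L_\mu=\prod_{i=1}^n\left[{K_i;0\atop\mu_i}\right]$, and $[K_i;r+1]^!=(K_i-1)(K_i-v)\cdots(K_i-v^r)$. *)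

theory Defs
  imports "HOL-Library.Poly_Mapping" "HOL-Computational_Algebra.Polynomial"
          "HOL-Computational_Algebra.Fraction_Field"
begin

type_synonym qv = "rat poly fract"

definition vv :: qv where "vv = Fract [:0, 1:] 1"

text \<open>U^0 = Q(v)[K_i^{+-1} | i in 'n]: group algebra of the free abelian group
  ('n =>0 int) (exponent vectors) over Q(v); 'n is a finite type with n = CARD('n).\<close>
type_synonym 'n U0 = "('n \<Rightarrow>\<^sub>0 int) \<Rightarrow>\<^sub>0 qv"

definition sc :: "qv \<Rightarrow> 'n U0" where "sc c = Poly_Mapping.single 0 c"

definition Kv :: "'n \<Rightarrow> 'n U0" where "Kv i = Poly_Mapping.single (Poly_Mapping.single i 1) 1"
definition Kinv :: "'n \<Rightarrow> 'n U0" where "Kinv i = Poly_Mapping.single (Poly_Mapping.single i (-1)) 1"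

text \<open>[X; a over t] for an invertible X with inverse Xi.\<close>
definition qbin :: "'n U0 \<Rightarrow> 'n U0 \<Rightarrow> int \<Rightarrow> nat \<Rightarrow> 'n U0" where
  "qbin X Xi a t = (\<Prod>s\<in>{1..t}.
      (X * sc (vv powi (a - int s + 1)) - Xi * sc (vv powi (- a + int s - 1)))
      * sc (inverse (vv ^ s - vv powi (- int s))))"

definition Lfr :: "('n::finite \<Rightarrow> nat) \<Rightarrow> 'n U0" where
  "Lfr mu = (\<Prod>i\<in>UNIV. qbin (Kv i) (Kinv i) 0 (mu i))"

definition Kfact :: "'n \<Rightarrow> nat \<Rightarrow> 'n U0" where
  "Kfact i r = (\<Prod>j\<in>{0..r}. Kv i - sc (vv ^ j))"

definition Lambda :: "nat \<Rightarrow> ('n::finite \<Rightarrow> nat) set" where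
  "Lambda r = {lam. (\<Sum>i\<in>UNIV. lam i) = r}"

definition gen_ideal :: "'a::comm_ring_1 set \<Rightarrow> 'a set" where
  "gen_ideal S = {\<Sum>x\<in>F. c x * x | F c. finite F \<and> F \<subseteq> S}"

definition Ir :: "nat \<Rightarrow> ('n::finite) U0 set" where
  "Ir r = {1 - (\<Sum>lam\<in>Lambda r. Lfr lam)}
        \<union> {Lfr lam * Lfr mu - (if lam = mu then Lfr lam else 0) | lam mu. lam \<in> Lambda r \<and> mu \<in> Lambda r}
        \<union> {Kv i * Lfr lam - sc (vv ^ lam i) * Lfr lam | i lam. lam \<in> Lambda r}"

definition Jr :: "nat \<Rightarrow> ('n::finite) U0 set" where
  "Jr r = {(\<Prod>i\<in>UNIV. Kv i) - sc (vv ^ r)} \<union> {Kfact i r | i. True}"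

end

theory Submission
  imports Defs "HOL-Library.FuncSet"
begin

text \<open>
  Modulo \<open>J\<^sub>r\<close>, the relation \<open>[K\<^sub>i; r+1]\<^sup>! = 0\<close> and Lagrange interpolation at the
  nodes \<open>1, v, \<dots>, v\<^sup>r\<close> split 1 into orthogonal idempotents \<open>e\<^sub>i\<^sub>,\<^sub>a\<close> on which \<open>K\<^sub>i\<close>
  acts by \<open>v\<^sup>a\<close>; their products \<open>E\<^sub>\<mu>\<close>, \<open>\<mu> \<in> {0..r}\<^sup>n\<close>, are orthogonal idempotents summing
  to 1 with \<open>K\<^sub>i E\<^sub>\<mu> = v\<^bsup>\<mu>\<^sub>i\<^esup> E\<^sub>\<mu>\<close>. The relation \<open>K\<^sub>1\<cdots>K\<^sub>n = v\<^sup>r\<close> kills \<open>E\<^sub>\<mu>\<close> unless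
  \<open>\<mu> \<in> \<Lambda>(n,r)\<close>, and \<open>\<L>\<^sub>\<lambda>\<close> acts on \<open>E\<^sub>\<mu>\<close> by \<open>\<delta>\<^sub>\<lambda>\<^sub>\<mu>\<close>, because \<open>[v\<^sup>m; 0 over t]\<close> is 0 for
  \<open>t > m\<close> and 1 for \<open>t = m\<close>, and for distinct \<open>\<lambda>, \<mu> \<in> \<Lambda>(n,r)\<close> some \<open>\<lambda>\<^sub>i\<close> exceeds \<open>\<mu>\<^sub>i\<close>.
  Hence \<open>\<L>\<^sub>\<lambda> \<equiv> E\<^sub>\<lambda>\<close> modulo \<open>J\<^sub>r\<close>, which gives all relations of \<open>I\<^sub>r\<close>.
  Conversely, modulo \<open>I\<^sub>r\<close> the \<open>\<L>\<^sub>\<lambda>\<close> are idempotents summing to 1 on which \<open>K\<^sub>i\<close> acts by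
  \<open>v\<^bsup>\<lambda>\<^sub>i\<^esup>\<close>, and every generator in \<open>J\<^sub>r\<close> acts on each of them by 0.
\<close>

lemma gen_ideal_base: "x \<in> S \<Longrightarrow> x \<in> gen_ideal S"
  unfolding gen_ideal_def by (auto intro!: exI[of _ "{x}"] exI[of _ "\<lambda>_. 1"])

lemma gen_ideal_0: "0 \<in> gen_ideal S"
  unfolding gen_ideal_def by (auto intro!: exI[of _ "{}"])

lemma gen_ideal_mult_left:
  assumes "a \<in> gen_ideal S"
  shows "y * a \<in> gen_ideal S"
proof -
  obtain F c where a: "a = (\<Sum>x\<in>F. c x * x)" "finite F" "F \<subseteq> S"
    using assms unfolding gen_ideal_def by blast
  have "y * a = (\<Sum>x\<in>F. (y * c x) * x)" by (simp add: a sum_distrib_left mult.assoc)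
  with a show ?thesis unfolding gen_ideal_def by (auto intro!: exI[of _ F])
qed

lemma gen_ideal_mult_right: "a \<in> gen_ideal S \<Longrightarrow> a * y \<in> gen_ideal S"
  using gen_ideal_mult_left[of a S y] by (simp add: mult.commute)

lemma gen_ideal_add:
  assumes "a \<in> gen_ideal S" "b \<in> gen_ideal S"
  shows "a + b \<in> gen_ideal S"
proof -
  obtain F c G d where a: "a = (\<Sum>x\<in>F. c x * x)" "finite F" "F \<subseteq> S"
    and b: "b = (\<Sum>x\<in>G. d x * x)" "finite G" "G \<subseteq> S"
    using assms unfolding gen_ideal_def by blast
  define e where "e x = (if x \<in> F then c x else 0) + (if x \<in> G then d x else 0)" for x
  have "(\<Sum>x\<in>F \<union> G. e x * x)
      = (\<Sum>x\<in>F \<union> G. if x \<in> F then c x * x else 0) + (\<Sum>x\<in>F \<union> G. if x \<in> G then d x * x else 0)"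
    unfolding e_def sum.distrib[symmetric] by (rule sum.cong) (auto simp: distrib_right)
  also have "\<dots> = a + b"
    using a b by (simp add: sum.inter_restrict[symmetric] Int_absorb1 Int_absorb2)
  finally show ?thesis
    using a b unfolding gen_ideal_def by (auto intro!: exI[of _ "F \<union> G"] exI[of _ e])
qed

lemma gen_ideal_diff:
  assumes "a \<in> gen_ideal S" "b \<in> gen_ideal S"
  shows "a - b \<in> gen_ideal S"
  using gen_ideal_add[OF assms(1) gen_ideal_mult_left[OF assms(2), of "-1"]] by simp

lemma gen_ideal_sum: "(\<And>x. x \<in> A \<Longrightarrow> f x \<in> gen_ideal S) \<Longrightarrow> sum f A \<in> gen_ideal S"
  by (induction A rule: infinite_finite_induct) (auto intro: gen_ideal_0 gen_ideal_add)

lemma gen_ideal_minimal: "A \<subseteq> gen_ideal B \<Longrightarrow> gen_ideal A \<subseteq> gen_ideal B"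
  unfolding gen_ideal_def[of A]
  by (auto intro!: gen_ideal_sum gen_ideal_mult_left)

lemma gen_ideal_mult_cong:
  assumes "a - a' \<in> gen_ideal S" "b - b' \<in> gen_ideal S"
  shows "a * b - a' * b' \<in> gen_ideal S"
proof -
  have "a * b - a' * b' = (a - a') * b + a' * (b - b')" by (simp add: algebra_simps)
  thus ?thesis using assms by (simp add: gen_ideal_add gen_ideal_mult_left gen_ideal_mult_right)
qed

lemma gen_ideal_trans:
  "a - b \<in> gen_ideal S \<Longrightarrow> b - c \<in> gen_ideal S \<Longrightarrow> a - c \<in> gen_ideal S"
  using gen_ideal_add[of "a - b" S "b - c"] by simp

lemma sc_add: "sc (a + b) = sc a + sc b" by (simp add: sc_def single_add)
lemma sc_diff: "sc (a - b) = sc a - sc b" by (simp add: sc_def single_diff)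
lemma sc_uminus: "sc (- a) = - sc a" by (simp add: sc_def single_uminus)
lemma sc_mult: "sc (a * b) = sc a * sc b" by (simp add: sc_def mult_single)
lemma sc_1: "sc 1 = 1" by (simp add: sc_def)
lemma sc_0: "sc 0 = 0" by (simp add: sc_def)

lemma sc_inverse_mult: "c \<noteq> 0 \<Longrightarrow> sc (inverse c) * sc c = 1"
  by (simp add: sc_1 flip: sc_mult)

lemma Kinv_mult_Kv: "Kinv i * Kv i = 1"
  by (simp add: Kinv_def Kv_def mult_single flip: single_add)

section \<open>Acting by a scalar modulo an ideal\<close>

definition acts_by :: "'n U0 set \<Rightarrow> 'n U0 \<Rightarrow> 'n U0 \<Rightarrow> qv \<Rightarrow> bool" where
  "acts_by S e X c \<longleftrightarrow> X * e - sc c * e \<in> gen_ideal S"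

lemma acts_by_sc: "acts_by S e (sc c) c"
  unfolding acts_by_def by (simp add: gen_ideal_0)

lemma acts_by_1: "acts_by S e 1 1"
  using acts_by_sc[of S e 1] by (simp add: sc_1)

lemma acts_by_diff:
  assumes "acts_by S e X c" "acts_by S e Y d"
  shows "acts_by S e (X - Y) (c - d)"
proof -
  have "(X - Y) * e - sc (c - d) * e = (X * e - sc c * e) - (Y * e - sc d * e)"
    by (simp add: sc_diff algebra_simps)
  with assms show ?thesis unfolding acts_by_def by (simp add: gen_ideal_diff)
qed

lemma acts_by_mult:
  assumes "acts_by S e X c" "acts_by S e Y d"
  shows "acts_by S e (X * Y) (c * d)"
proof -
  have "(X * Y) * e - sc (c * d) * e = X * (Y * e - sc d * e) + sc d * (X * e - sc c * e)"
    by (simp add: sc_mult algebra_simps)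
  with assms show ?thesis
    unfolding acts_by_def by (simp add: gen_ideal_add gen_ideal_mult_left)
qed

lemma acts_by_0: "acts_by S e X 0 \<Longrightarrow> X * e \<in> gen_ideal S"
  unfolding acts_by_def by (simp add: sc_0)

lemma acts_by_prod:
  "(\<And>x. x \<in> A \<Longrightarrow> acts_by S e (f x) (g x)) \<Longrightarrow> acts_by S e (prod f A) (prod g A)"
  by (induction A rule: infinite_finite_induct) (auto simp: acts_by_1 intro: acts_by_mult)

lemma acts_by_mult_vector: "acts_by S e X c \<Longrightarrow> acts_by S (e * f) X c"
  unfolding acts_by_def using gen_ideal_mult_right[of "X * e - sc c * e" S f]
  by (simp add: algebra_simps)

lemma acts_by_inverse:
  assumes "acts_by S e X c" "Y * X = 1" "c \<noteq> 0"
  shows "acts_by S e Y (inverse c)"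
proof -
  have "- (Y * sc (inverse c)) * (X * e - sc c * e)
      = Y * (sc (inverse c) * sc c) * e - sc (inverse c) * (Y * X) * e"
    by (simp add: algebra_simps)
  also have "\<dots> = Y * e - sc (inverse c) * e"
    unfolding assms(2) sc_inverse_mult[OF assms(3)] by simp
  finally show ?thesis
    using gen_ideal_mult_left assms(1) unfolding acts_by_def by metis
qed

lemma acts_by_in_gen_ideal:
  assumes "acts_by S e X c" "X \<in> gen_ideal S" "c \<noteq> 0"
  shows "e \<in> gen_ideal S"
proof -
  have "sc c * e \<in> gen_ideal S"
    using gen_ideal_diff[OF gen_ideal_mult_right[OF assms(2), of e] assms(1)[unfolded acts_by_def]]
    by simp
  hence "sc (inverse c) * (sc c * e) \<in> gen_ideal S" by (rule gen_ideal_mult_left)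
  thus ?thesis unfolding mult.assoc[symmetric] sc_inverse_mult[OF assms(3)] by simp
qed

lemma vv_power: "vv ^ a = Fract ([:0, 1:] ^ a) 1"
  by (induction a) (simp_all add: vv_def One_fract_def)

lemma vv_power_nonzero: "vv ^ a \<noteq> 0"
  by (simp add: vv_power Zero_fract_def eq_fract)

lemma vv_power_eq_iff: "vv ^ a = vv ^ b \<longleftrightarrow> a = b"
proof
  assume "vv ^ a = vv ^ b"
  hence "degree ([:0, 1::rat:] ^ a) = degree ([:0, 1::rat:] ^ b)" by (simp add: vv_power eq_fract)
  thus "a = b" by (simp add: degree_power_eq)
qed simp

lemma vv_power_minus_inverse_nonzero:
  assumes "s \<ge> 1"
  shows "vv ^ s - inverse (vv ^ s) \<noteq> 0"
proof
  assume "vv ^ s - inverse (vv ^ s) = 0"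
  hence "vv ^ s * vv ^ s = 1" using vv_power_nonzero[of s] by (simp add: field_simps)
  hence "vv ^ (2 * s) = vv ^ 0" by (simp add: mult_2 power_add)
  thus False using assms by (simp only: vv_power_eq_iff)
qed

definition qbin_val :: "qv \<Rightarrow> qv \<Rightarrow> int \<Rightarrow> nat \<Rightarrow> qv" where
  "qbin_val c ci a t = (\<Prod>s\<in>{1..t}.
      (c * vv powi (a - int s + 1) - ci * vv powi (- a + int s - 1))
      * inverse (vv ^ s - vv powi (- int s)))"

lemma acts_by_qbin:
  "acts_by S e X c \<Longrightarrow> acts_by S e Xi ci \<Longrightarrow> acts_by S e (qbin X Xi a t) (qbin_val c ci a t)"
  unfolding qbin_def qbin_val_def by (intro acts_by_prod acts_by_mult acts_by_diff acts_by_sc)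

text \<open>At \<open>X = v\<^sup>m\<close>, the \<open>s\<close>-th numerator factor of \<open>[X; 0 over t]\<close> is the
  denominator factor with index \<open>m + 1 - s\<close>.\<close>
lemma qbin_factor_vv_power:
  assumes "1 \<le> s" "s \<le> m + 1"
  shows "vv ^ m * vv powi (0 - int s + 1) - inverse (vv ^ m) * vv powi (- 0 + int s - 1)
         = vv ^ (m + 1 - s) - inverse (vv ^ (m + 1 - s))"
proof -
  define k where "k = m + 1 - s"
  have m: "m = (s - 1) + k" and e1: "0 - int s + 1 = - int (s - 1)" and e2: "- 0 + int s - 1 = int (s - 1)"
    using assms by (auto simp: k_def)
  have "(a * b) * inverse a - inverse (a * b) * a = b - inverse b"
    if "a \<noteq> 0" "b \<noteq> 0" for a b :: qv
    using that by (simp add: field_simps)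
  then show ?thesis
    unfolding e1 e2 power_int_minus power_int_of_nat k_def[symmetric] unfolding m power_add
    using vv_power_nonzero by blast
qed

lemma qbin_val_vv_power_less:
  assumes "m < t"
  shows "qbin_val (vv ^ m) (inverse (vv ^ m)) 0 t = 0"
proof -
  have "vv ^ m * vv powi (0 - int (m + 1) + 1) - inverse (vv ^ m) * vv powi (- 0 + int (m + 1) - 1) = 0"
    using qbin_factor_vv_power[of "m + 1" m] by simp
  thus ?thesis
    unfolding qbin_val_def using assms by (intro prod_zero bexI[of _ "m + 1"]) auto
qed

lemma qbin_val_vv_power_self: "qbin_val (vv ^ m) (inverse (vv ^ m)) 0 m = 1"
proof -
  define g where "g k = vv ^ k - inverse (vv ^ k)" for k
  have "qbin_val (vv ^ m) (inverse (vv ^ m)) 0 m = (\<Prod>s\<in>{1..m}. g (m + 1 - s) * inverse (g s))"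
    unfolding qbin_val_def
  proof (rule prod.cong[OF refl])
    fix s assume "s \<in> {1..m}"
    then have "1 \<le> s" "s \<le> m + 1" by auto
    then show "(vv ^ m * vv powi (0 - int s + 1) - inverse (vv ^ m) * vv powi (- 0 + int s - 1))
        * inverse (vv ^ s - vv powi (- int s)) = g (m + 1 - s) * inverse (g s)"
      by (simp only: qbin_factor_vv_power g_def power_int_minus power_int_of_nat)
  qed
  also have "\<dots> = (\<Prod>s\<in>{1..m}. g (m + 1 - s)) * inverse (\<Prod>s\<in>{1..m}. g s)"
    by (simp add: prod.distrib prod_inversef[symmetric])
  also have "(\<Prod>s\<in>{1..m}. g (m + 1 - s)) = (\<Prod>s\<in>{1..m}. g s)"
    by (rule prod.atLeastAtMost_rev[symmetric])
  also have "(\<Prod>s\<in>{1..m}. g s) * inverse (\<Prod>s\<in>{1..m}. g s) = 1"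
    using vv_power_minus_inverse_nonzero by (simp add: g_def)
  finally show ?thesis .
qed

section \<open>Lagrange interpolation at \<open>1, v, \<dots>, v\<^sup>r\<close>\<close>

definition peval :: "'n U0 \<Rightarrow> qv poly \<Rightarrow> 'n U0" where
  "peval X p = poly (map_poly sc p) X"

lemma peval_pCons: "peval X (pCons a p) = sc a + X * peval X p"
  unfolding peval_def by (simp add: map_poly_pCons sc_0)

lemma peval_0: "peval X 0 = 0"
  by (simp add: peval_def)

lemma peval_1: "peval X 1 = 1"
  unfolding one_pCons by (simp add: peval_pCons peval_0 sc_1)

lemma peval_add: "peval X (p + q) = peval X p + peval X q"
  by (induction p q rule: poly_induct2) (simp_all add: peval_pCons peval_0 sc_add algebra_simps)

lemma peval_smult: "peval X (smult c p) = sc c * peval X p"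
  by (induction p) (simp_all add: peval_pCons peval_0 sc_mult algebra_simps)

lemma peval_mult: "peval X (p * q) = peval X p * peval X q"
  by (induction p) (simp_all add: peval_pCons peval_0 peval_add peval_smult sc_0 algebra_simps)

lemma peval_sum: "peval X (sum f A) = (\<Sum>a\<in>A. peval X (f a))"
  by (induction A rule: infinite_finite_induct) (simp_all add: peval_0 peval_add)

lemma peval_prod: "peval X (prod f A) = (\<Prod>a\<in>A. peval X (f a))"
  by (induction A rule: infinite_finite_induct) (simp_all add: peval_1 peval_mult)

lemma peval_linear: "peval X [:- c, 1:] = X - sc c"
  by (simp add: peval_pCons peval_0 sc_1 sc_uminus)

definition lagrange_denom :: "nat \<Rightarrow> nat \<Rightarrow> qv" where
  "lagrange_denom r a = (\<Prod>j\<in>{0..r} - {a}. vv ^ a - vv ^ j)"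

lemma lagrange_denom_nonzero: "lagrange_denom r a \<noteq> 0"
  unfolding lagrange_denom_def using vv_power_eq_iff by (auto simp: prod_zero_iff)

lemma lagrange_delta:
  assumes "m \<in> {0..r}"
  shows "inverse (lagrange_denom r a) * (\<Prod>j\<in>{0..r} - {a}. vv ^ m - vv ^ j) = (if a = m then 1 else 0)"
proof (cases "a = m")
  case True
  thus ?thesis using lagrange_denom_nonzero[of r a] by (simp add: lagrange_denom_def)
next
  case False
  hence "(\<Prod>j\<in>{0..r} - {a}. vv ^ m - vv ^ j) = 0"
    using assms by (intro prod_zero bexI[of _ m]) auto
  thus ?thesis using False by simp
qed

lemma lagrange_poly_sum:
  "(\<Sum>a\<in>{0..r}. smult (inverse (lagrange_denom r a)) (\<Prod>j\<in>{0..r} - {a}. [:- (vv ^ j), 1:])) = 1"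
  (is "?P = 1")
proof (rule poly_eqI_degree[where A = "(\<lambda>m. vv ^ m) ` {0..r}"])
  fix x assume "x \<in> (\<lambda>m. vv ^ m) ` {0..r}"
  then obtain m where m: "m \<in> {0..r}" and x: "x = vv ^ m" by blast
  have "poly ?P x = (\<Sum>a\<in>{0..r}. inverse (lagrange_denom r a) * (\<Prod>j\<in>{0..r} - {a}. vv ^ m - vv ^ j))"
    by (simp add: poly_sum poly_prod x)
  also have "\<dots> = 1" using m by (simp add: lagrange_delta)
  finally show "poly ?P x = poly 1 x" by simp
next
  have card: "card ((\<lambda>m. vv ^ m) ` {0..r}) = r + 1"
    by (subst card_image) (auto simp: inj_on_def vv_power_eq_iff)
  have "degree ?P \<le> r"
  proof (rule degree_sum_le)
    fix a assume a: "a \<in> {0..r}"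
    have "degree (\<Prod>j\<in>{0..r} - {a}. [:- (vv ^ j), 1:]) \<le> (\<Sum>j\<in>{0..r} - {a}. 1)"
      using degree_prod_sum_le[of "{0..r} - {a}" "\<lambda>j. [:- (vv ^ j), 1:]"] by (simp add: comp_def)
    also have "\<dots> \<le> r" using a by simp
    finally show "degree (smult (inverse (lagrange_denom r a)) (\<Prod>j\<in>{0..r} - {a}. [:- (vv ^ j), 1:])) \<le> r"
      using degree_smult_le order_trans by blast
  qed simp
  with card show "degree ?P < card ((\<lambda>m. vv ^ m) ` {0..r})" by simp
  show "degree (1::qv poly) < card ((\<lambda>m. vv ^ m) ` {0..r})" using card by simp
qed

definition lagrange_basis :: "nat \<Rightarrow> 'n \<Rightarrow> nat \<Rightarrow> 'n U0" where
  "lagrange_basis r i a = sc (inverse (lagrange_denom r a)) * (\<Prod>j\<in>{0..r} - {a}. Kv i - sc (vv ^ j))"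

lemma sum_lagrange_basis: "(\<Sum>a\<in>{0..r}. lagrange_basis r i a) = 1"
  using arg_cong[OF lagrange_poly_sum[of r], of "peval (Kv i)"]
  by (simp add: peval_sum peval_smult peval_prod peval_linear peval_1 lagrange_basis_def)

lemma Kv_acts_on_lagrange_basis:
  assumes "a \<in> {0..r}"
  shows "acts_by (Jr r) (lagrange_basis r i a) (Kv i) (vv ^ a)"
proof -
  have "Kv i * lagrange_basis r i a - sc (vv ^ a) * lagrange_basis r i a
      = sc (inverse (lagrange_denom r a)) * Kfact i r"
    unfolding Kfact_def lagrange_basis_def using assms by (simp add: prod.remove algebra_simps)
  moreover have "Kfact i r \<in> gen_ideal (Jr r)"
    by (rule gen_ideal_base) (auto simp: Jr_def)
  ultimately show ?thesis
    unfolding acts_by_def by (simp add: gen_ideal_mult_left)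
qed

lemma Lambda_le: "lam \<in> Lambda r \<Longrightarrow> lam i \<le> r"
  unfolding Lambda_def using member_le_sum[of i UNIV lam] by auto

lemma Lambda_obtain_greater_component:
  assumes "lam \<in> Lambda r" "mu \<in> Lambda r" "lam \<noteq> mu"
  obtains i where "mu i < lam i"
proof -
  have "\<not> (\<forall>i. lam i \<le> mu i)"
  proof
    assume le: "\<forall>i. lam i \<le> mu i"
    with assms(3) obtain i where "lam i < mu i" by (meson le_neq_implies_less ext)
    with le have "sum lam UNIV < sum mu UNIV" by (intro sum_strict_mono_ex1) auto
    with assms(1,2) show False by (simp add: Lambda_def)
  qed
  with that show ?thesis by (auto simp: not_le)
qed

section \<open>The generators \<open>J\<^sub>r\<close> lie in the ideal of \<open>I\<^sub>r\<close>\<close>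

lemma Kv_acts_on_Lfr: "lam \<in> Lambda r \<Longrightarrow> acts_by (Ir r) (Lfr lam) (Kv i) (vv ^ lam i)"
  unfolding acts_by_def by (intro gen_ideal_base) (auto simp: Ir_def)

text \<open>Modulo \<open>I\<^sub>r\<close> the \<open>\<L>\<^sub>\<lambda>\<close> sum to 1, so it suffices to kill each of them.\<close>
lemma in_gen_ideal_Ir_if_mult_Lfr:
  assumes "\<And>lam. lam \<in> Lambda r \<Longrightarrow> x * Lfr lam \<in> gen_ideal (Ir r)"
  shows "x \<in> gen_ideal (Ir r)"
proof -
  have "x * (1 - (\<Sum>lam\<in>Lambda r. Lfr lam)) \<in> gen_ideal (Ir r)"
    by (intro gen_ideal_mult_left gen_ideal_base) (simp add: Ir_def)
  moreover have "(\<Sum>lam\<in>Lambda r. x * Lfr lam) \<in> gen_ideal (Ir r)"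
    using assms by (rule gen_ideal_sum)
  moreover have "x = x * (1 - (\<Sum>lam\<in>Lambda r. Lfr lam)) + (\<Sum>lam\<in>Lambda r. x * Lfr lam)"
    by (simp add: sum_distrib_left algebra_simps)
  ultimately show ?thesis by (metis gen_ideal_add)
qed

lemma Jr_subset_gen_ideal_Ir: "Jr r \<subseteq> gen_ideal (Ir r :: ('n::finite) U0 set)"
proof
  fix x :: "'n U0" assume "x \<in> Jr r"
  then consider (prod_Kv) "x = (\<Prod>i\<in>UNIV. Kv i) - sc (vv ^ r)" | (Kfact) i where "x = Kfact i r"
    unfolding Jr_def by blast
  then show "x \<in> gen_ideal (Ir r)"
  proof cases
    case prod_Kv
    show ?thesis
    proof (rule in_gen_ideal_Ir_if_mult_Lfr)
      fix lam :: "'n \<Rightarrow> nat" assume lam: "lam \<in> Lambda r"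
      have "acts_by (Ir r) (Lfr lam) x ((\<Prod>i\<in>UNIV. vv ^ lam i) - vv ^ r)"
        unfolding prod_Kv by (intro acts_by_diff acts_by_prod Kv_acts_on_Lfr lam acts_by_sc)
      moreover have "(\<Prod>i\<in>UNIV. vv ^ lam i) - vv ^ r = 0"
        using lam by (simp add: Lambda_def flip: power_sum)
      ultimately show "x * Lfr lam \<in> gen_ideal (Ir r)" by (metis acts_by_0)
    qed
  next
    case Kfact
    show ?thesis
    proof (rule in_gen_ideal_Ir_if_mult_Lfr)
      fix lam :: "'n \<Rightarrow> nat" assume lam: "lam \<in> Lambda r"
      have "acts_by (Ir r) (Lfr lam) x (\<Prod>j\<in>{0..r}. vv ^ lam i - vv ^ j)"
        unfolding Kfact Kfact_def by (intro acts_by_diff acts_by_prod Kv_acts_on_Lfr lam acts_by_sc)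
      moreover have "(\<Prod>j\<in>{0..r}. vv ^ lam i - vv ^ j) = 0"
        using Lambda_le[OF lam, of i] by (intro prod_zero bexI[of _ "lam i"]) auto
      ultimately show "x * Lfr lam \<in> gen_ideal (Ir r)" by (metis acts_by_0)
    qed
  qed
qed

section \<open>The generators \<open>I\<^sub>r\<close> lie in the ideal of \<open>J\<^sub>r\<close>\<close>

definition cube :: "nat \<Rightarrow> ('n::finite \<Rightarrow> nat) set" where
  "cube r = PiE UNIV (\<lambda>_. {0..r})"

lemma mem_cube_iff: "mu \<in> cube r \<longleftrightarrow> (\<forall>i. mu i \<le> r)"
  unfolding cube_def by (auto simp: PiE_UNIV_domain)

lemma finite_cube: "finite (cube r)"
  unfolding cube_def by (rule finite_PiE) auto

lemma Lambda_subset_cube: "Lambda r \<subseteq> cube r"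
  using Lambda_le mem_cube_iff by blast

definition cube_idem :: "nat \<Rightarrow> ('n::finite \<Rightarrow> nat) \<Rightarrow> 'n U0" where
  "cube_idem r mu = (\<Prod>i\<in>UNIV. lagrange_basis r i (mu i))"

lemma sum_cube_idem: "(\<Sum>mu\<in>cube r. cube_idem r mu) = 1"
proof -
  have "(\<Sum>mu\<in>cube r. cube_idem r mu) = (\<Prod>i\<in>UNIV. \<Sum>a\<in>{0..r}. lagrange_basis r i a)"
    unfolding cube_def cube_idem_def by (rule prod_sum_PiE[symmetric]) auto
  thus ?thesis by (simp add: sum_lagrange_basis)
qed

lemma Kv_acts_on_cube_idem:
  assumes "mu \<in> cube r"
  shows "acts_by (Jr r) (cube_idem r mu) (Kv i) (vv ^ mu i)"
proof -
  have "cube_idem r mu = lagrange_basis r i (mu i) * (\<Prod>j\<in>UNIV - {i}. lagrange_basis r j (mu j))"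
    unfolding cube_idem_def by (simp add: prod.remove)
  thus ?thesis
    using assms by (simp add: mem_cube_iff acts_by_mult_vector Kv_acts_on_lagrange_basis)
qed

lemma Kinv_acts_on_cube_idem:
  "mu \<in> cube r \<Longrightarrow> acts_by (Jr r) (cube_idem r mu) (Kinv i) (inverse (vv ^ mu i))"
  by (rule acts_by_inverse[OF Kv_acts_on_cube_idem Kinv_mult_Kv vv_power_nonzero])

lemma cube_idem_acts_on_cube_idem:
  assumes mu: "mu \<in> cube r"
  shows "acts_by (Jr r) (cube_idem r mu) (cube_idem r lam) (if lam = mu then 1 else 0)"
proof -
  have "acts_by (Jr r) (cube_idem r mu) (cube_idem r lam)
      (\<Prod>i\<in>UNIV. inverse (lagrange_denom r (lam i)) * (\<Prod>j\<in>{0..r} - {lam i}. vv ^ mu i - vv ^ j))"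
    unfolding cube_idem_def[of r lam] lagrange_basis_def
    by (intro acts_by_prod acts_by_mult acts_by_diff acts_by_sc Kv_acts_on_cube_idem mu)
  also have "(\<Prod>i\<in>UNIV. inverse (lagrange_denom r (lam i)) * (\<Prod>j\<in>{0..r} - {lam i}. vv ^ mu i - vv ^ j))
      = (\<Prod>i\<in>UNIV. if lam i = mu i then 1 else 0)"
    using mu by (intro prod.cong refl lagrange_delta) (simp add: mem_cube_iff)
  also have "\<dots> = (if lam = mu then 1 else 0)"
    by (auto simp: fun_eq_iff intro: prod_zero)
  finally show ?thesis .
qed

lemma cube_idem_orthogonal:
  assumes "mu \<in> cube r"
  shows "cube_idem r lam * cube_idem r mu - (if lam = mu then cube_idem r lam else 0) \<in> gen_ideal (Jr r)"
  using cube_idem_acts_on_cube_idem[OF assms, of lam]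
  unfolding acts_by_def by (cases "lam = mu") (simp_all add: sc_0 sc_1)

lemma cube_idem_in_gen_ideal_Jr:
  assumes "mu \<in> cube r" "mu \<notin> Lambda r"
  shows "cube_idem r mu \<in> gen_ideal (Jr r)"
proof (rule acts_by_in_gen_ideal)
  show "acts_by (Jr r) (cube_idem r mu) ((\<Prod>i\<in>UNIV. Kv i) - sc (vv ^ r)) ((\<Prod>i\<in>UNIV. vv ^ mu i) - vv ^ r)"
    by (intro acts_by_diff acts_by_prod acts_by_sc Kv_acts_on_cube_idem assms(1))
  show "(\<Prod>i\<in>UNIV. Kv i) - sc (vv ^ r) \<in> gen_ideal (Jr r)"
    by (intro gen_ideal_base) (simp add: Jr_def)
  show "(\<Prod>i\<in>UNIV. vv ^ mu i) - vv ^ r \<noteq> 0"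
    using assms(2) by (simp add: Lambda_def vv_power_eq_iff flip: power_sum)
qed

lemma Lfr_acts_on_cube_idem:
  assumes "mu \<in> cube r" "lam \<in> Lambda r" "mu \<in> Lambda r"
  shows "acts_by (Jr r) (cube_idem r mu) (Lfr lam) (if lam = mu then 1 else 0)"
proof -
  have "acts_by (Jr r) (cube_idem r mu) (Lfr lam)
      (\<Prod>i\<in>UNIV. qbin_val (vv ^ mu i) (inverse (vv ^ mu i)) 0 (lam i))"
    unfolding Lfr_def
    by (intro acts_by_prod acts_by_qbin Kv_acts_on_cube_idem Kinv_acts_on_cube_idem assms(1))
  moreover have "(\<Prod>i\<in>UNIV. qbin_val (vv ^ mu i) (inverse (vv ^ mu i)) 0 (lam i))
      = (if lam = mu then 1 else 0)"
  proof (cases "lam = mu")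
    case False
    with assms(2,3) obtain i where "mu i < lam i" by (rule Lambda_obtain_greater_component)
    thus ?thesis using False by (auto intro!: prod_zero exI[of _ i] simp: qbin_val_vv_power_less)
  qed (simp add: qbin_val_vv_power_self)
  ultimately show ?thesis by simp
qed

lemma Lfr_cong_cube_idem:
  fixes lam :: "'n::finite \<Rightarrow> nat"
  assumes lam: "lam \<in> Lambda r"
  shows "Lfr lam - cube_idem r lam \<in> gen_ideal (Jr r)"
proof -
  have "Lfr lam - cube_idem r lam
      = (\<Sum>mu\<in>cube r. Lfr lam * cube_idem r mu - (if mu = lam then cube_idem r mu else 0))"
    using lam Lambda_subset_cube
    by (auto simp: sum_subtractf finite_cube sum_cube_idem simp flip: sum_distrib_left)
  also have "\<dots> \<in> gen_ideal (Jr r)"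
  proof (rule gen_ideal_sum)
    fix mu :: "'n \<Rightarrow> nat" assume mu: "mu \<in> cube r"
    show "Lfr lam * cube_idem r mu - (if mu = lam then cube_idem r mu else 0) \<in> gen_ideal (Jr r)"
    proof (cases "mu \<in> Lambda r")
      case True
      with Lfr_acts_on_cube_idem[OF mu lam] show ?thesis
        unfolding acts_by_def by (auto simp: sc_0 sc_1)
    next
      case False
      with lam mu show ?thesis by (auto intro: gen_ideal_mult_left cube_idem_in_gen_ideal_Jr)
    qed
  qed
  finally show ?thesis .
qed

lemma Ir_subset_gen_ideal_Jr: "Ir r \<subseteq> gen_ideal (Jr r :: ('n::finite) U0 set)"
proof
  fix x :: "'n U0" assume "x \<in> Ir r"
  then consider
      (sum) "x = 1 - (\<Sum>lam\<in>Lambda r. Lfr lam)"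
    | (orth) lam mu where "x = Lfr lam * Lfr mu - (if lam = mu then Lfr lam else 0)"
        "lam \<in> Lambda r" "mu \<in> Lambda r"
    | (weight) i lam where "x = Kv i * Lfr lam - sc (vv ^ lam i) * Lfr lam" "lam \<in> Lambda r"
    unfolding Ir_def by blast
  then show "x \<in> gen_ideal (Jr r)"
  proof cases
    case sum
    have "x = (\<Sum>mu\<in>cube r - Lambda r. cube_idem r mu) + (\<Sum>mu\<in>Lambda r. cube_idem r mu - Lfr mu)"
      unfolding sum sum_cube_idem[of r, symmetric] sum_subtractf
      using sum.subset_diff[OF Lambda_subset_cube finite_cube] by simp
    also have "\<dots> \<in> gen_ideal (Jr r)"
      using cube_idem_in_gen_ideal_Jr Lfr_cong_cube_idem gen_ideal_mult_left[of _ _ "-1"]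
      by (intro gen_ideal_add gen_ideal_sum) fastforce+
    finally show ?thesis .
  next
    case orth
    let ?E = "cube_idem r"
    have "Lfr lam * Lfr mu - ?E lam * ?E mu \<in> gen_ideal (Jr r)"
      by (intro gen_ideal_mult_cong Lfr_cong_cube_idem orth(2,3))
    moreover have "?E lam * ?E mu - (if lam = mu then ?E lam else 0) \<in> gen_ideal (Jr r)"
      using orth(3) Lambda_subset_cube by (intro cube_idem_orthogonal) blast
    moreover have "(if lam = mu then ?E lam else 0) - (if lam = mu then Lfr lam else 0) \<in> gen_ideal (Jr r)"
      using gen_ideal_mult_left[OF Lfr_cong_cube_idem[OF orth(2)], of "-1"] by (auto simp: gen_ideal_0)
    ultimately show ?thesis
      unfolding orth(1) by (metis gen_ideal_trans)
  next
    case weight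
    let ?D = "Kv i - sc (vv ^ lam i)"
    have "?D * Lfr lam - ?D * cube_idem r lam \<in> gen_ideal (Jr r)"
      by (intro gen_ideal_mult_cong Lfr_cong_cube_idem weight(2)) (simp add: gen_ideal_0)
    moreover have "?D * cube_idem r lam \<in> gen_ideal (Jr r)"
      using Kv_acts_on_cube_idem[of lam r i] weight(2) Lambda_subset_cube
      unfolding acts_by_def by (auto simp: algebra_simps)
    ultimately have "?D * Lfr lam \<in> gen_ideal (Jr r)"
      using gen_ideal_add by fastforce
    thus ?thesis by (simp add: weight(1) algebra_simps)
  qed
qed

theorem lemma5p1p2:
  fixes r :: nat
  assumes "r \<ge> 1"
  shows "gen_ideal (Ir r :: ('n::finite) U0 set) = gen_ideal (Jr r)"
  by (intro equalityI gen_ideal_minimal Ir_subset_gen_ideal_Jr Jr_subset_gen_ideal_Ir)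

end
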